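(* For any assessment $\mathcal{A}\subseteq\mathscr{Q}$, the following are equivalent: (1) $\mathcal{A}$ is consistent; (2) $\mathrm{Ex}(\mathcal{A})$ is a coherent set of desirable option sets; (3) $\emptyset\notin\mathrm{Ex}(\mathcal{A})$.
   Context: Let $\mathcal{X}$ be a nonempty set and let $\mathscr{V}$ be the real vector space of all functions $u:\mathcal{X}\to\mathbb{R}$ (options), with pointwise operations. For $u,v\in\mathscr{V}$, $u\le v$ iff $u(x)\le v(x)$ for all $x\in\mathcal{X}$, and $u<v$ iff $u\le v$ and $u\neq v$. Let $\mathscr{V}_{>0}=\{u\in\mathscr{V}:0<u\}$ and $\mathscr{V}^s_{>0}=\{\{u\}:u\in\mathscr{V}_{>0}\}$. Let $\mathscr{Q}$ be the set of all finite subsets of $\mathscr{V}$ (including $\emptyset$). For a positive integer $n$, $\mathbb{R}^{n,+}=\{\boldsymbol\lambda\in\mathbb{R}^n:\lambda_j\ge0\ \forall j,\ \sum_j\lambda_j>0\}$, and for $\boldsymbol\lambda\in\mathbb{R}^n$, $\mathbf u=(u_1,\dots,u_n)\in\mathscr{V}^n$, $\boldsymbol\lambda\mathbf u=\sum_{j=1}^n\lambda_ju_j$. A set of desirable option sets is any $K\subseteq\mathscr{Q}$. It is coherent if for all $A,B\in K$: (K0) $A\setminus\{0\}\in K$; (K1) $\{0\}\notin K$; (K2) $\mathscr{V}^s_{>0}\subseteq K$; (K3) $\{\boldsymbol\lambda(\mathbf u)\mathbf u:\mathbf u\in A\times B\}\in K$ for every map $\boldsymbol\lambda:A\times B\to\mathbb{R}^{2,+}$;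 (K4) $A\cup Q\in K$ for all $Q\in\mathscr{Q}$. $\bar{\mathbf K}$ denotes the set of coherent sets of desirable option sets. An assessment is any subset $\mathcal{A}\subseteq\mathscr{Q}$. Let $\bar{\mathbf K}(\mathcal A)=\{K\in\bar{\mathbf K}:\mathcal A\subseteq K\}$ and $\mathrm{Ex}(\mathcal A)=\bigcap\bar{\mathbf K}(\mathcal A)$, with the convention $\bigcap\emptyset=\mathscr{Q}$. $\mathcal A$ is called consistent if $\bar{\mathbf K}(\mathcal A)\neq\emptyset$. *)

theory Defs
  imports Main "HOL.Real"
begin

type_synonym 'x opt = "'x \<Rightarrow> real"

definition opt_lt :: "'x opt \<Rightarrow> 'x opt \<Rightarrow> bool" where
  "opt_lt u v \<longleftrightarrow> (\<forall>x. u x \<le> v x) \<and> u \<noteq> v"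

definition Vpos :: "'x opt set" where
  "Vpos = {u. opt_lt (\<lambda>_. 0) u}"

definition Vpos_s :: "'x opt set set" where
  "Vpos_s = {{u} | u. u \<in> Vpos}"

definition Qsets :: "'x opt set set" where
  "Qsets = {A. finite A}"

definition R2plus :: "(real \<times> real) set" where
  "R2plus = {(a, b). a \<ge> 0 \<and> b \<ge> 0 \<and> a + b > 0}"

definition coherent :: "'x opt set set \<Rightarrow> bool" where
  "coherent K \<longleftrightarrow> K \<subseteq> Qsets \<and>
     (\<forall>A\<in>K. A - {\<lambda>_. 0} \<in> K) \<and>
     {\<lambda>_. 0} \<notin> K \<and>
     Vpos_s \<subseteq> K \<and>
     (\<forall>A\<in>K. \<forall>B\<in>K. \<forall>lam :: 'x opt \<times> 'x opt \<Rightarrow> real \<times> real.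
        (\<forall>p\<in>A \<times> B. lam p \<in> R2plus) \<longrightarrow>
        (\<lambda>(u, v). (\<lambda>x. fst (lam (u, v)) * u x + snd (lam (u, v)) * v x)) ` (A \<times> B) \<in> K) \<and>
     (\<forall>A\<in>K. \<forall>Q\<in>Qsets. A \<union> Q \<in> K)"

definition coherent_sets_containing :: "'x opt set set \<Rightarrow> 'x opt set set set" where
  "coherent_sets_containing \<A> = {K. coherent K \<and> \<A> \<subseteq> K}"

definition Ex :: "'x opt set set \<Rightarrow> 'x opt set set" where
  "Ex \<A> = (if coherent_sets_containing \<A> = {} then Qsets else \<Inter> (coherent_sets_containing \<A>))"

definition consistent :: "'x opt set set \<Rightarrow> bool" where
  "consistent \<A> \<longleftrightarrow> coherent_sets_containing \<A> \<noteq> {}"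

end

theory Submission
  imports Defs
begin

text \<open>Coherence is a conjunction of closure conditions, each preserved by intersecting a nonempty
  family, so a consistent assessment has the smallest coherent superset \<open>Ex \<A>\<close>. For an
  inconsistent one, \<open>Ex \<A> = Qsets\<close> contains \<open>{}\<close>, while no coherent set does: by (K4) it would
  then contain \<open>{0}\<close>.\<close>

lemma coherentD:
  assumes "coherent K"
  shows coherent_subset_Qsets: "K \<subseteq> Qsets"
    and coherent_remove_zero: "\<And>A. A \<in> K \<Longrightarrow> A - {\<lambda>_. 0} \<in> K"
    and coherent_zero_notin: "{\<lambda>_. 0} \<notin> K"
    and coherent_Vpos_s: "Vpos_s \<subseteq> K"
    and coherent_combination: "\<And>A B lam. A \<in> K \<Longrightarrow> B \<in> K \<Longrightarrow> (\<forall>p\<in>A \<times> B. lam p \<in> R2plus) \<Longrightarrow>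
        (\<lambda>(u, v). (\<lambda>x. fst (lam (u, v)) * u x + snd (lam (u, v)) * v x)) ` (A \<times> B) \<in> K"
    and coherent_Un_Qsets: "\<And>A Q. A \<in> K \<Longrightarrow> Q \<in> Qsets \<Longrightarrow> A \<union> Q \<in> K"
  using assms unfolding coherent_def by blast+

lemma coherent_Inter:
  assumes "S \<noteq> {}" and coh: "\<And>K. K \<in> S \<Longrightarrow> coherent K"
  shows "coherent (\<Inter> S)"
proof -
  obtain K0 where K0: "K0 \<in> S" using assms(1) by blast
  have "\<Inter> S \<subseteq> Qsets"
    using coherent_subset_Qsets[OF coh[OF K0]] K0 by blast
  moreover have "\<forall>A\<in>\<Inter> S. A - {\<lambda>_. 0} \<in> \<Inter> S"
    using coherent_remove_zero[OF coh] by blast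
  moreover have "{\<lambda>_. 0} \<notin> \<Inter> S"
    using coherent_zero_notin[OF coh[OF K0]] K0 by blast
  moreover have "Vpos_s \<subseteq> \<Inter> S"
    using coherent_Vpos_s[OF coh] by blast
  moreover have "\<forall>A\<in>\<Inter> S. \<forall>B\<in>\<Inter> S. \<forall>lam :: 'a opt \<times> 'a opt \<Rightarrow> real \<times> real.
        (\<forall>p\<in>A \<times> B. lam p \<in> R2plus) \<longrightarrow>
        (\<lambda>(u, v). (\<lambda>x. fst (lam (u, v)) * u x + snd (lam (u, v)) * v x)) ` (A \<times> B) \<in> \<Inter> S"
    using coherent_combination[OF coh] by blast
  moreover have "\<forall>A\<in>\<Inter> S. \<forall>Q\<in>Qsets. A \<union> Q \<in> \<Inter> S"
    using coherent_Un_Qsets[OF coh] by blast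
  ultimately show ?thesis
    unfolding coherent_def by (intro conjI)
qed

lemma empty_notin_coherent:
  assumes "coherent K"
  shows "{} \<notin> K"
proof
  assume "{} \<in> K"
  moreover have "{\<lambda>_. 0} \<in> Qsets" by (simp add: Qsets_def)
  ultimately have "{} \<union> {\<lambda>_. 0} \<in> K" by (rule coherent_Un_Qsets[OF assms])
  with coherent_zero_notin[OF assms] show False by simp
qed

lemma empty_in_Qsets: "{} \<in> Qsets"
  by (simp add: Qsets_def)

lemma not_coherent_Qsets: "\<not> coherent Qsets"
  using empty_notin_coherent empty_in_Qsets by blast

lemma Ex_inconsistent: "\<not> consistent \<A> \<Longrightarrow> Ex \<A> = Qsets"
  by (simp add: Ex_def consistent_def)

lemma coherent_Ex:
  assumes "consistent \<A>"
  shows "coherent (Ex \<A>)"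
proof -
  have "coherent_sets_containing \<A> \<noteq> {}" using assms by (simp add: consistent_def)
  then have "coherent (\<Inter> (coherent_sets_containing \<A>))"
    by (rule coherent_Inter) (simp add: coherent_sets_containing_def)
  then show ?thesis using assms by (simp add: Ex_def consistent_def)
qed

theorem theorem3:
  fixes \<A> :: "('x \<Rightarrow> real) set set"
  assumes "\<A> \<subseteq> Qsets"
  shows "(consistent \<A> \<longleftrightarrow> coherent (Ex \<A>)) \<and> (coherent (Ex \<A>) \<longleftrightarrow> {} \<notin> Ex \<A>)"
proof (cases "consistent \<A>")
  case True
  then have "coherent (Ex \<A>)" by (rule coherent_Ex)
  with True show ?thesis using empty_notin_coherent by blast
next
  case False
  then have "Ex \<A> = Qsets" by (rule Ex_inconsistent)
  with False show ?thesis by (simp add: not_coherent_Qsets empty_in_Qsets)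
qed

end
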